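(* Let $G$ be a finite group and $k$ a continuous positive definite kernel on a compact set $\mathcal Z$ satisfying the eigendecay condition below with exponent $p>1$. Fix $\lambda>0$ and $T\in\mathbb N$, and let $\boldsymbol b_k=\{b_Z:Z\subset\mathcal Z,|Z|\le T\}$ with $b_Z(z)=\big(k(z,z)-k_Z(z)^\top(K_Z+\lambda I)^{-1}k_Z(z)\big)^{1/2}$. Let $\mathcal N_{k,\boldsymbol b}(\epsilon)$ be the $\epsilon$-covering number of $\boldsymbol b_k$ in the sup norm. Then $\log\mathcal N_{k,\boldsymbol b}(\epsilon)=O\Big(\big(\tfrac1{\epsilon^2|G|^p}\big)^{\frac2{p-1}}\big(1+\log\tfrac1\epsilon\big)\Big)$, with implied constant independent of $\epsilon$ and $|G|$.
   Context: Eigendecay condition: $k$ has a Mercer expansion $k(z,z')=\sum_{m\ge1}\lambda_m\phi_m(z)\phi_m(z')$ (with respect to a finite measure on $\mathcal Z$) with $\lambda_1\ge\lambda_2\ge\dots>0$, $\{\phi_m\}$ orthonormal in $L^2$, $\sup_{m,z}|\phi_m(z)|\le C_\phi$, and $\lambda_m\le C\,(m|G|)^{-p}$ for all $m$, for constants $C,C_\phi>0$, $p>1$. For $Z=\{z_1,\dots,z_t\}$: $k_Z(z)=[k(z,z_1),\dots,k(z,z_t)]^\top$, $K_Z=[k(z_i,z_j)]_{i,j=1}^t$. The $\epsilon$-covering number of a function class $\mathcal F$ is the smallest size of a subset $\mathcal C\subseteq\mathcal F$ such that every $f\in\mathcal F$ has some $g\in\mathcal C$ with $\sup_z|f(z)-g(z)|\le\epsilon$.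 *)

theory Defs
  imports "HOL-Analysis.Analysis" "HOL-Algebra.Group"
    "Jordan_Normal_Form.Gauss_Jordan_Elimination"
begin

definition pd_kernel :: "'a set \<Rightarrow> ('a \<Rightarrow> 'a \<Rightarrow> real) \<Rightarrow> bool" where
  "pd_kernel D k \<longleftrightarrow> (\<forall>x\<in>D. \<forall>y\<in>D. k x y = k y x) \<and>
     (\<forall>xs c. set xs \<subseteq> D \<longrightarrow>
        (\<Sum>i<length xs. \<Sum>j<length xs. c i * c j * k (xs!i) (xs!j)) \<ge> 0)"

text \<open>Mercer expansion with eigendecay (eigen-indices m = 1,2,... shifted to 0,1,...),
  with respect to a finite measure mu on D.\<close>
definition eigendecay :: "'a set \<Rightarrow> 'a measure \<Rightarrow> ('a \<Rightarrow> 'a \<Rightarrow> real) \<Rightarrow> (nat \<Rightarrow> real)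
    \<Rightarrow> (nat \<Rightarrow> 'a \<Rightarrow> real) \<Rightarrow> real \<Rightarrow> real \<Rightarrow> real \<Rightarrow> nat \<Rightarrow> bool" where
  "eigendecay D mu k lam phi C Cphi p g \<longleftrightarrow>
     finite_measure mu \<and> space mu = D \<and>
     (\<forall>m. phi m \<in> borel_measurable mu) \<and>
     (\<forall>i j. integrable mu (\<lambda>z. phi i z * phi j z) \<and>
            (\<integral>z. phi i z * phi j z \<partial>mu) = (if i = j then 1 else 0)) \<and>
     (\<forall>z\<in>D. \<forall>z'\<in>D. (\<lambda>m. lam m * phi m z * phi m z') sums k z z') \<and>
     (\<forall>m. lam (Suc m) \<le> lam m) \<and> (\<forall>m. lam m > 0) \<and>
     (\<forall>m. \<forall>z\<in>D. \<bar>phi m z\<bar> \<le> Cphi) \<and>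
     (\<forall>m. lam m \<le> C * (real (Suc m) * real g) powr (- p))"

definition kvec :: "('a \<Rightarrow> 'a \<Rightarrow> real) \<Rightarrow> 'a list \<Rightarrow> 'a \<Rightarrow> real vec" where
  "kvec k zs z = vec (length zs) (\<lambda>i. k z (zs!i))"

definition kmat :: "('a \<Rightarrow> 'a \<Rightarrow> real) \<Rightarrow> 'a list \<Rightarrow> real mat" where
  "kmat k zs = mat (length zs) (length zs) (\<lambda>(i,j). k (zs!i) (zs!j))"

definition post_sd :: "('a \<Rightarrow> 'a \<Rightarrow> real) \<Rightarrow> real \<Rightarrow> 'a list \<Rightarrow> 'a \<Rightarrow> real" where
  "post_sd k reg zs z = sqrt (k z z - scalar_prod (kvec k zs z)
      (mult_mat_vec (the (mat_inverse (kmat k zs + reg \<cdot>\<^sub>m 1\<^sub>m (length zs)))) (kvec k zs z)))"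

definition post_sd_class :: "'a set \<Rightarrow> ('a \<Rightarrow> 'a \<Rightarrow> real) \<Rightarrow> real \<Rightarrow> nat \<Rightarrow> ('a \<Rightarrow> real) set" where
  "post_sd_class D k reg T = {post_sd k reg zs | zs. distinct zs \<and> set zs \<subseteq> D \<and> length zs \<le> T}"

text \<open>epsilon-covering number in sup norm over D (infinity if no finite cover exists).\<close>
definition covering_number :: "('a \<Rightarrow> real) set \<Rightarrow> 'a set \<Rightarrow> real \<Rightarrow> enat" where
  "covering_number F D eps = Inf ((\<lambda>Cv. enat (card Cv)) `
     {Cv. Cv \<subseteq> F \<and> finite Cv \<and> (\<forall>f\<in>F. \<exists>g\<in>Cv. \<forall>z\<in>D. \<bar>f z - g z\<bar> \<le> eps)})"

end

(*
  With W = (K_Z + reg I)^-1, whose entries are bounded by 1/reg because K_Z + reg I is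
  coercive, b_Z(z)^2 = k(z,z) - k_Z(z)^T W k_Z(z).  Replacing k by its Mercer expansion
  truncated after M terms changes the quadratic form by O(T^2 |G|^-p M^(1-p)) and turns it
  into  sum_{m,n<M} phi_m(z) phi_n(z) feature_coeff Z m n,  where the M^2 coefficients do
  not depend on z and are bounded uniformly in Z.  Rounding them to a grid of mesh delta
  therefore labels a cover of b_k with (2 ceil(R/delta) + 1)^(M^2) elements.  Taking
  M ~ (eps^-2 |G|^-p)^(1/(p-1)) and delta ~ eps^2 / M^2 gives the bound.
*)
theory Submission
  imports Defs "Jordan_Normal_Form.Determinant"
begin

lemma real_sqrt_power2_abs: "(sqrt x)\<^sup>2 = \<bar>x\<bar>"
proof (cases "x \<ge> 0")
  case False
  then have "sqrt x = - sqrt (- x)"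
    using real_sqrt_minus[of "- x"] by simp
  with False show ?thesis by simp
qed simp

text \<open>The factor 2 is needed because \<open>sqrt\<close> is odd on negative arguments.\<close>

lemma abs_sqrt_diff_le:
  fixes a b :: real
  shows "\<bar>sqrt a - sqrt b\<bar> \<le> sqrt (2 * \<bar>a - b\<bar>)"
proof -
  have "(sqrt a - sqrt b)\<^sup>2 \<le> 2 * \<bar>a - b\<bar>"
  proof (cases "0 \<le> a \<longleftrightarrow> 0 \<le> b")
    case True
    then have "0 \<le> sqrt a * sqrt b"
      by (auto simp: zero_le_mult_iff simp flip: real_sqrt_mult)
    moreover have "\<bar>u - v\<bar> \<le> \<bar>u + v\<bar>" if "0 \<le> u * v" for u v :: real
      using that by (simp add: abs_le_square_iff power2_diff power2_sum)
    ultimately have "\<bar>sqrt a - sqrt b\<bar> \<le> \<bar>sqrt a + sqrt b\<bar>"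
      by blast
    have "(sqrt a - sqrt b)\<^sup>2 = \<bar>sqrt a - sqrt b\<bar> * \<bar>sqrt a - sqrt b\<bar>"
      by (simp add: power2_eq_square)
    also have "\<dots> \<le> \<bar>sqrt a - sqrt b\<bar> * \<bar>sqrt a + sqrt b\<bar>"
      using \<open>\<bar>sqrt a - sqrt b\<bar> \<le> \<bar>sqrt a + sqrt b\<bar>\<close> by (rule mult_left_mono) simp
    also have "\<dots> = \<bar>(sqrt a - sqrt b) * (sqrt a + sqrt b)\<bar>"
      by (simp add: abs_mult)
    also have "\<dots> = \<bar>\<bar>a\<bar> - \<bar>b\<bar>\<bar>"
      by (simp add: algebra_simps flip: real_sqrt_power2_abs power2_eq_square)
    also have "\<dots> \<le> \<bar>a - b\<bar>"
      by (rule abs_triangle_ineq3)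
    also have "\<dots> \<le> 2 * \<bar>a - b\<bar>"
      by simp
    finally show ?thesis .
  next
    case False
    have "(x - y)\<^sup>2 \<le> 2 * (x\<^sup>2 + y\<^sup>2)" for x y :: real
      using zero_le_power2[of "x + y"] by (simp add: power2_diff power2_sum)
    then have "(sqrt a - sqrt b)\<^sup>2 \<le> 2 * ((sqrt a)\<^sup>2 + (sqrt b)\<^sup>2)" .
    moreover have "\<bar>a - b\<bar> = \<bar>a\<bar> + \<bar>b\<bar>"
      using False by (auto simp: abs_if)
    ultimately show ?thesis
      by (simp add: real_sqrt_power2_abs)
  qed
  then show ?thesis
    using real_sqrt_le_mono by (fastforce simp flip: real_sqrt_abs)
qed

lemma le_inverse_of_mult_square_le:
  fixes r x :: real
  assumes "r > 0" and "r * x\<^sup>2 \<le> x"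
  shows "x \<le> 1 / r"
proof (cases "x \<le> 0")
  case True
  moreover have "0 < 1 / r"
    using assms(1) by simp
  ultimately show ?thesis
    by linarith
qed (use assms in \<open>auto simp: power2_eq_square field_simps\<close>)

lemma powr_le_1_of_nonpos: "1 \<le> x \<Longrightarrow> a \<le> 0 \<Longrightarrow> x powr a \<le> (1 :: real)"
  using powr_mono[of a 0 x] by simp

lemma powr_neg_le_diff_powr:
  fixes p y :: real
  assumes p: "p > 1" and y: "y > 0"
  shows "(y + 1) powr - p \<le> (y powr (1 - p) - (y + 1) powr (1 - p)) / (p - 1)"
proof -
  have "\<exists>z>y. z < y + 1 \<and>
      (y + 1) powr (1 - p) - y powr (1 - p) = (y + 1 - y) * ((1 - p) * z powr - p)"
  proof (rule MVT2)
    fix x assume "y \<le> x"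
    with y show "((\<lambda>x. x powr (1 - p)) has_real_derivative (1 - p) * x powr - p) (at x)"
      using has_real_derivative_powr[of x "1 - p"] by simp
  qed simp
  then obtain z where z: "y < z" "z < y + 1"
    and mvt: "(y + 1) powr (1 - p) - y powr (1 - p) = (1 - p) * z powr - p"
    by auto
  have "(p - 1) * (y + 1) powr - p \<le> (p - 1) * z powr - p"
    using z y p by (intro mult_left_mono powr_mono2') auto
  also have "\<dots> = y powr (1 - p) - (y + 1) powr (1 - p)"
    using mvt by (simp add: algebra_simps)
  finally show ?thesis
    using p by (simp add: field_simps)
qed

lemma powr_tail_sum:
  fixes p :: real and M :: nat
  assumes p: "p > 1"
  shows "summable (\<lambda>m. real (m + M + 1) powr - p)"
    and "(\<Sum>m. real (m + M + 1) powr - p) \<le> 2 powr p * real (M + 1) powr (1 - p) / (p - 1)"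
proof -
  define h where "h m = real (m + M + 1) powr (1 - p)" for m
  have "h \<longlonglongrightarrow> 0"
    unfolding h_def using p
    by (intro tendsto_neg_powr filterlim_at_top_mono[OF filterlim_real_sequentially]) auto
  then have "(\<lambda>m. h m - h (Suc m)) sums h 0"
    using telescope_sums' by fastforce
  then have tel: "(\<lambda>m. 2 powr p / (p - 1) * (h m - h (Suc m))) sums (2 powr p / (p - 1) * h 0)"
    by (rule sums_mult)
  have le: "real (m + M + 1) powr - p \<le> 2 powr p / (p - 1) * (h m - h (Suc m))" for m
  proof -
    define y where "y = real (m + M + 1)"
    have y: "y \<ge> 1" by (simp add: y_def)
    \<comment> \<open>\<open>2 powr p\<close> buys the comparison with the telescoping term at \<open>y\<close>
      instead of \<open>y - 1\<close>, which may be 0\<close>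
    have "y powr - p = 2 powr p * (2 * y) powr - p"
      using y by (simp add: powr_mult powr_minus field_simps)
    also have "\<dots> \<le> 2 powr p * (y + 1) powr - p"
      using y p by (intro mult_left_mono powr_mono2') auto
    also have "\<dots> \<le> 2 powr p * ((y powr (1 - p) - (y + 1) powr (1 - p)) / (p - 1))"
      using y p by (intro mult_left_mono powr_neg_le_diff_powr) auto
    finally show ?thesis
      by (simp add: h_def y_def add_ac)
  qed
  show summable: "summable (\<lambda>m. real (m + M + 1) powr - p)"
    using le by (intro summable_comparison_test'[OF sums_summable[OF tel], of 0]) simp
  have "(\<Sum>m. real (m + M + 1) powr - p) \<le> 2 powr p / (p - 1) * h 0"
    by (rule sums_le[OF le summable_sums[OF summable] tel])
  then show "(\<Sum>m. real (m + M + 1) powr - p) \<le> 2 powr p * real (M + 1) powr (1 - p) / (p - 1)"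
    by (simp add: h_def)
qed

lemma nat_floor_powr_bounds:
  fixes y q :: real
  assumes y: "y > 0" and q: "q > 0"
  defines "M \<equiv> nat \<lfloor>y powr (1 / q)\<rfloor>"
  shows "real (M + 1) powr - q \<le> 1 / y" and "(real M)\<^sup>2 \<le> y powr (2 / q)"
proof -
  define r where "r = y powr (1 / q)"
  have r: "r > 0" "r powr q = y"
    using y q by (simp_all add: r_def powr_powr)
  have M: "real M \<le> r" "r < real M + 1"
    using r(1) by (simp_all add: M_def r_def[symmetric])
  have "y \<le> real (M + 1) powr q"
    using M r q by (auto intro: powr_mono2)
  then show "real (M + 1) powr - q \<le> 1 / y"
    using y by (simp add: powr_minus field_simps)
  have "(real M)\<^sup>2 \<le> r\<^sup>2"
    using M by (intro power_mono) auto
  also have "r\<^sup>2 = y powr (2 / q)"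
    by (simp add: r_def power2_eq_square flip: powr_add)
  finally show "(real M)\<^sup>2 \<le> y powr (2 / q)" .
qed

lemma ln_le_mult_ln_of_le_power:
  fixes N n k :: nat
  assumes "N \<le> n ^ k" and "1 \<le> n"
  shows "ln (real N) \<le> real k * ln (real n)"
proof (cases "N = 0")
  case False
  then have "ln (real N) \<le> ln (real (n ^ k))"
    using assms by simp
  then show ?thesis
    using assms by (simp add: ln_realpow)
qed (use assms in simp)

lemma ln_le_mult_one_plus_ln:
  fixes K e A Y :: real
  assumes K: "K \<ge> 1" and e: "e \<ge> 1" and A: "A \<ge> 0" and Y: "0 < Y" "Y \<le> K * e powr A"
  shows "ln Y \<le> (ln K + A) * (1 + ln e)"
proof -
  have "ln Y \<le> ln (K * e powr A)"
    using Y K e by (subst ln_le_cancel_iff) auto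
  also have "\<dots> = ln K + A * ln e"
    using K e by (simp add: ln_mult ln_powr)
  also have "\<dots> \<le> (ln K + A) * (1 + ln e)"
    using K e A by (simp add: algebra_simps)
  finally show ?thesis .
qed

lemma ln_le_of_le_grid_card:
  fixes N M :: nat and L :: int and B K e b :: real
  assumes N: "N \<le> nat (2 * L + 1) ^ (M * M)" and L: "0 \<le> L"
    and M: "(real M)\<^sup>2 \<le> B" and grid: "2 * real_of_int L + 1 \<le> K * e powr b"
    and K: "1 \<le> K" and e: "1 \<le> e" and b: "0 \<le> b"
  shows "ln (real N) \<le> B * ((ln K + b) * (1 + ln e))"
proof -
  have "ln (real N) \<le> (real M)\<^sup>2 * ln (2 * real_of_int L + 1)"
    using ln_le_mult_ln_of_le_power[OF N] L by (simp add: power2_eq_square)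
  also have "\<dots> \<le> B * ((ln K + b) * (1 + ln e))"
    using M L ln_le_mult_one_plus_ln[OF K e b _ grid] order_trans[OF zero_le_power2 M]
    by (intro mult_mono) auto
  finally show ?thesis .
qed

lemma abs_diff_lt_of_floor_divide_eq:
  fixes x y \<delta> :: real
  assumes "\<lfloor>x / \<delta>\<rfloor> = \<lfloor>y / \<delta>\<rfloor>" and "\<delta> > 0"
  shows "\<bar>x - y\<bar> < \<delta>"
proof -
  have "\<bar>x / \<delta> - y / \<delta>\<bar> < 1"
    using assms(1) by linarith
  with assms(2) show ?thesis
    by (simp add: field_simps flip: diff_divide_distrib)
qed

lemma floor_divide_mem_bounds:
  fixes x R \<delta> :: real
  assumes "\<bar>x\<bar> \<le> R" and "\<delta> > 0"
  shows "\<lfloor>x / \<delta>\<rfloor> \<in> {- \<lceil>R / \<delta>\<rceil>..\<lceil>R / \<delta>\<rceil>}"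
proof -
  have "- R / \<delta> \<le> x / \<delta>" "x / \<delta> \<le> R / \<delta>"
    using divide_right_mono[of "- R" x \<delta>] divide_right_mono[of x R \<delta>] assms by auto
  moreover have "R / \<delta> \<le> of_int \<lceil>R / \<delta>\<rceil>"
    by (rule le_of_int_ceiling)
  ultimately have "- of_int \<lceil>R / \<delta>\<rceil> \<le> x / \<delta>" "x / \<delta> < of_int \<lceil>R / \<delta>\<rceil> + 1"
    by linarith+
  then show ?thesis
    by (simp add: le_floor_iff floor_le_iff)
qed

lemma square_mult_mesh_le:
  fixes M :: nat and s eps :: real
  assumes "s > 0"
  shows "(real M)\<^sup>2 * (s\<^sup>2 * (eps\<^sup>2 / (4 * ((real M)\<^sup>2 + 1) * s\<^sup>2))) \<le> eps\<^sup>2 / 4"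
proof -
  have M: "(real M)\<^sup>2 + 1 > 0"
    by (simp add: add_nonneg_pos)
  then have "(real M)\<^sup>2 * (s\<^sup>2 * (eps\<^sup>2 / (4 * ((real M)\<^sup>2 + 1) * s\<^sup>2)))
      = eps\<^sup>2 / 4 * ((real M)\<^sup>2 / ((real M)\<^sup>2 + 1))"
    using assms by (simp add: divide_simps)
  also have "\<dots> \<le> eps\<^sup>2 / 4"
    using M by (intro mult_left_le) (simp_all add: divide_le_eq_1_pos)
  finally show ?thesis .
qed

lemma quantization_level_bound:
  fixes eps b A R s :: real and M :: nat
  assumes eps: "0 < eps" "eps < 1" and b: "b \<ge> 0" and A: "A \<ge> 0" and R: "R \<ge> 0" and s: "s > 0"
    and M: "(real M)\<^sup>2 \<le> A * (1 / eps) powr b"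
  shows "2 * real_of_int \<lceil>R / (eps\<^sup>2 / (4 * ((real M)\<^sup>2 + 1) * s\<^sup>2))\<rceil> + 1
    \<le> (8 * R * s\<^sup>2 * (A + 1) + 3) * (1 / eps) powr (b + 2)"
proof -
  have e: "1 \<le> (1 / eps) powr b" "1 \<le> (1 / eps) powr (b + 2)"
    using eps b by (auto intro!: ge_one_powr_ge_zero)
  have "(real M)\<^sup>2 + 1 \<le> (A + 1) * (1 / eps) powr b"
    using M e(1) by (simp add: algebra_simps)
  have "R / (eps\<^sup>2 / (4 * ((real M)\<^sup>2 + 1) * s\<^sup>2)) = 4 * R * s\<^sup>2 * ((real M)\<^sup>2 + 1) * (1 / eps) powr 2"
    using eps by (simp add: powr_numeral power_one_over field_simps)
  also have "\<dots> \<le> 4 * R * s\<^sup>2 * ((A + 1) * (1 / eps) powr b) * (1 / eps) powr 2"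
    using \<open>(real M)\<^sup>2 + 1 \<le> (A + 1) * (1 / eps) powr b\<close> R
    by (intro mult_right_mono mult_left_mono) auto
  also have "\<dots> = 4 * R * s\<^sup>2 * (A + 1) * (1 / eps) powr (b + 2)"
    by (simp add: powr_add)
  finally have "R / (eps\<^sup>2 / (4 * ((real M)\<^sup>2 + 1) * s\<^sup>2)) \<le> 4 * R * s\<^sup>2 * (A + 1) * (1 / eps) powr (b + 2)" .
  moreover have "(8 * R * s\<^sup>2 * (A + 1) + 3) * (1 / eps) powr (b + 2)
      = 2 * (4 * R * s\<^sup>2 * (A + 1) * (1 / eps) powr (b + 2)) + 3 * (1 / eps) powr (b + 2)"
    by (simp add: algebra_simps)
  ultimately show ?thesis
    using e(2) of_int_ceiling_le_add_one[of "R / (eps\<^sup>2 / (4 * ((real M)\<^sup>2 + 1) * s\<^sup>2))"]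
    by linarith
qed

lemma abs_double_sum_le:
  fixes f :: "nat \<Rightarrow> nat \<Rightarrow> real"
  assumes "\<And>i j. i < t \<Longrightarrow> j < t \<Longrightarrow> \<bar>f i j\<bar> \<le> B"
  shows "\<bar>\<Sum>i<t. \<Sum>j<t. f i j\<bar> \<le> (real t)\<^sup>2 * B"
proof -
  have "\<bar>\<Sum>i<t. \<Sum>j<t. f i j\<bar> \<le> (\<Sum>i<t. \<Sum>j<t. \<bar>f i j\<bar>)"
    by (rule order_trans[OF sum_abs]) (intro sum_mono sum_abs)
  also have "\<dots> \<le> (\<Sum>i<t. \<Sum>j<t. B)"
    using assms by (intro sum_mono) auto
  finally show ?thesis
    by (simp add: power2_eq_square)
qed

lemma quadratic_form_perturbation:
  fixes a b :: "nat \<Rightarrow> real" and W :: "nat \<Rightarrow> nat \<Rightarrow> real"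
  assumes W: "\<And>i j. i < t \<Longrightarrow> j < t \<Longrightarrow> \<bar>W i j\<bar> \<le> w"
    and a: "\<And>i. i < t \<Longrightarrow> \<bar>a i\<bar> \<le> \<kappa>"
    and ab: "\<And>i. i < t \<Longrightarrow> \<bar>a i - b i\<bar> \<le> \<rho>" and \<rho>: "\<rho> \<le> \<kappa>"
  shows "\<bar>(\<Sum>i<t. \<Sum>j<t. a i * W i j * a j) - (\<Sum>i<t. \<Sum>j<t. b i * W i j * b j)\<bar>
    \<le> (real t)\<^sup>2 * (w * (3 * \<kappa> * \<rho>))"
proof -
  have "\<bar>a i * W i j * a j - b i * W i j * b j\<bar> \<le> w * (3 * \<kappa> * \<rho>)"
    if i: "i < t" and j: "j < t" for i j
  proof -
    have "\<bar>b i\<bar> \<le> 2 * \<kappa>"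
      using a[OF i] ab[OF i] \<rho> by linarith
    then have "\<bar>(a i - b i) * a j + b i * (a j - b j)\<bar> \<le> \<rho> * \<kappa> + 2 * \<kappa> * \<rho>"
      using a[OF j] ab[OF i] ab[OF j]
      by (intro abs_triangle_ineq[THEN order_trans] add_mono)
        (auto simp: abs_mult intro!: mult_mono)
    moreover have "a i * W i j * a j - b i * W i j * b j
        = W i j * ((a i - b i) * a j + b i * (a j - b j))"
      by (simp add: algebra_simps)
    ultimately show ?thesis
      using W[OF i j] by (auto simp: abs_mult intro!: mult_mono)
  qed
  then show ?thesis
    by (simp add: abs_double_sum_le flip: sum_subtractf)
qed

lemma quadratic_form_of_linear_combination:
  fixes x :: "nat \<Rightarrow> real"
  shows "(\<Sum>i<t. \<Sum>j<t. (\<Sum>m<M. x m * B m i) * W i j * (\<Sum>n<M. x n * B n j))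
    = (\<Sum>m<M. \<Sum>n<M. x m * x n * (\<Sum>i<t. \<Sum>j<t. B m i * W i j * B n j))"
proof -
  have "(\<Sum>i<t. \<Sum>j<t. (\<Sum>m<M. x m * B m i) * W i j * (\<Sum>n<M. x n * B n j))
     = (\<Sum>i<t. \<Sum>j<t. \<Sum>m<M. \<Sum>n<M. x m * x n * (B m i * W i j * B n j))"
    by (simp add: sum_distrib_left sum_distrib_right mult_ac)
  also have "\<dots> = (\<Sum>i<t. \<Sum>m<M. \<Sum>j<t. \<Sum>n<M. x m * x n * (B m i * W i j * B n j))"
    by (simp add: sum.swap[of _ "{..<t}" "{..<M}"])
  also have "\<dots> = (\<Sum>m<M. \<Sum>i<t. \<Sum>n<M. \<Sum>j<t. x m * x n * (B m i * W i j * B n j))"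
    by (subst sum.swap) (simp add: sum.swap[of _ "{..<t}" "{..<M}"])
  also have "\<dots> = (\<Sum>m<M. \<Sum>n<M. \<Sum>i<t. \<Sum>j<t. x m * x n * (B m i * W i j * B n j))"
    by (simp add: sum.swap[of _ "{..<t}" "{..<M}"])
  also have "\<dots> = (\<Sum>m<M. \<Sum>n<M. x m * x n * (\<Sum>i<t. \<Sum>j<t. B m i * W i j * B n j))"
    by (simp add: sum_distrib_left)
  finally show ?thesis .
qed

lemma covering_number_image_le:
  assumes S: "finite S" and lab: "lab ` X \<subseteq> S"
    and close: "\<And>x y z. x \<in> X \<Longrightarrow> y \<in> X \<Longrightarrow> lab x = lab y \<Longrightarrow> z \<in> D
      \<Longrightarrow> \<bar>f x z - f y z\<bar> \<le> eps"
  shows "covering_number (f ` X) D eps \<le> enat (card S)"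
proof -
  define Cv where "Cv = (\<lambda>l. f (inv_into X lab l)) ` lab ` X"
  have "Cv \<subseteq> f ` X"
    by (auto simp: Cv_def inv_into_into)
  moreover have "finite Cv" and "card Cv \<le> card S"
    using finite_subset[OF lab S] card_mono[OF S lab] card_image_le unfolding Cv_def
    by (auto intro: order_trans)
  moreover have "\<exists>h'\<in>Cv. \<forall>z\<in>D. \<bar>h z - h' z\<bar> \<le> eps" if "h \<in> f ` X" for h
  proof -
    from that obtain x where x: "x \<in> X" "h = f x"
      by blast
    define y where "y = inv_into X lab (lab x)"
    have y: "y \<in> X" "lab x = lab y"
      using x(1) by (simp_all add: y_def inv_into_into f_inv_into_f)
    have "f y \<in> Cv"
      using x(1) by (simp add: Cv_def y_def)
    with close[OF x(1) y] x(2) show ?thesis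
      by blast
  qed
  ultimately have "covering_number (f ` X) D eps \<le> enat (card Cv)"
    unfolding covering_number_def by (intro Inf_lower) auto
  also have "\<dots> \<le> enat (card S)"
    using \<open>card Cv \<le> card S\<close> by simp
  finally show ?thesis .
qed

lemma scalar_prod_self_eq_sum_squares: "(v :: real vec) \<bullet> v = (\<Sum>l<dim_vec v. (v $ l)\<^sup>2)"
  by (simp add: scalar_prod_def lessThan_atLeast0 power2_eq_square)

lemma quadratic_form_eq_double_sum:
  fixes W :: "'b :: comm_semiring_0 mat"
  assumes "W \<in> carrier_mat n n" and "x \<in> carrier_vec n"
  shows "x \<bullet> (W *\<^sub>v x) = (\<Sum>i<n. \<Sum>j<n. x $ i * W $$ (i, j) * x $ j)"
  using assms by (auto simp: scalar_prod_def lessThan_atLeast0 row_def sum_distrib_left mult.assoc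
      intro!: sum.cong)

lemma coercive_mat_inverse:
  fixes A :: "real mat"
  assumes A: "A \<in> carrier_mat n n" and r: "r > 0"
    and coercive: "\<And>v. v \<in> carrier_vec n \<Longrightarrow> r * (v \<bullet> v) \<le> v \<bullet> (A *\<^sub>v v)"
  obtains W where "mat_inverse A = Some W" "W \<in> carrier_mat n n" "A * W = 1\<^sub>m n"
proof -
  have "Determinant.det A \<noteq> 0"
  proof
    assume "Determinant.det A = 0"
    then obtain v where v: "v \<in> carrier_vec n" "v \<noteq> 0\<^sub>v n" "A *\<^sub>v v = 0\<^sub>v n"
      using det_0_iff_vec_prod_zero[OF A] by auto
    have "r * (\<Sum>l<n. (v $ l)\<^sup>2) \<le> 0"
      using coercive[OF v(1)] v by (simp add: scalar_prod_self_eq_sum_squares)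
    then have "(\<Sum>l<n. (v $ l)\<^sup>2) \<le> 0"
      using r by (simp add: mult_le_0_iff)
    then have "(\<Sum>l<n. (v $ l)\<^sup>2) = 0"
      by (simp add: order_antisym sum_nonneg)
    then have "v = 0\<^sub>v n"
      using v(1) by (intro eq_vecI) (auto simp: sum_nonneg_eq_0_iff)
    with v(2) show False ..
  qed
  then have "A \<in> Units (ring_mat TYPE(real) n ())"
    by (rule det_non_zero_imp_unit[OF A])
  then obtain W where "mat_inverse A = Some W"
    using mat_inverse(1)[OF A] by fastforce
  with mat_inverse(2)[OF A this] that show thesis by blast
qed

lemma coercive_mat_inverse_entry_bound:
  fixes A W :: "real mat"
  assumes A: "A \<in> carrier_mat n n" and W: "W \<in> carrier_mat n n" and AW: "A * W = 1\<^sub>m n"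
    and r: "r > 0"
    and coercive: "\<And>v. v \<in> carrier_vec n \<Longrightarrow> r * (v \<bullet> v) \<le> v \<bullet> (A *\<^sub>v v)"
    and i: "i < n" and j: "j < n"
  shows "\<bar>W $$ (i, j)\<bar> \<le> 1 / r"
proof -
  define c where "c = col W j"
  have c: "c \<in> carrier_vec n"
    using W j by (simp add: c_def)
  have "A *\<^sub>v c = unit_vec n j"
    using col_mult2[OF A W j] AW j by (simp add: c_def)
  then have cAc: "r * (c \<bullet> c) \<le> c $ j"
    using coercive[OF c] j by simp
  have sq: "(c $ l)\<^sup>2 \<le> c \<bullet> c" if "l < n" for l
    using c that by (auto simp: scalar_prod_self_eq_sum_squares intro!: member_le_sum)
  have r_sq: "r * (c $ l)\<^sup>2 \<le> c $ j" if "l < n" for l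
    using mult_left_mono[OF sq[OF that], of r] r cAc by linarith
  have "r * (c $ j)\<^sup>2 \<le> c $ j"
    using r_sq[OF j] .
  then have cj: "c $ j \<le> 1 / r"
    using r by (rule le_inverse_of_mult_square_le[rotated])
  have "r * (c $ i)\<^sup>2 \<le> 1 / r"
    using r_sq[OF i] cj by linarith
  then have "(c $ i)\<^sup>2 \<le> (1 / r)\<^sup>2"
    using r by (simp add: power2_eq_square field_simps)
  then show ?thesis
    using r W i j abs_le_square_iff[of "W $$ (i, j)" "1 / r"] by (simp add: c_def)
qed

lemma kmat_reg_coercive:
  assumes pd: "pd_kernel D k" and zs: "set zs \<subseteq> D" and v: "v \<in> carrier_vec (length zs)"
  shows "reg * (v \<bullet> v) \<le> v \<bullet> ((kmat k zs + reg \<cdot>\<^sub>m 1\<^sub>m (length zs)) *\<^sub>v v)"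
proof -
  let ?n = "length zs"
  have K: "kmat k zs \<in> carrier_mat ?n ?n"
    by (simp add: kmat_def)
  have "v \<bullet> (kmat k zs *\<^sub>v v) = (\<Sum>i<?n. \<Sum>j<?n. v $ i * v $ j * k (zs ! i) (zs ! j))"
    using quadratic_form_eq_double_sum[OF K v] by (simp add: kmat_def mult_ac)
  also have "\<dots> \<ge> 0"
    using pd zs unfolding pd_kernel_def by blast
  finally have "v \<bullet> (kmat k zs *\<^sub>v v) \<ge> 0" .
  moreover have "(kmat k zs + reg \<cdot>\<^sub>m 1\<^sub>m ?n) *\<^sub>v v = kmat k zs *\<^sub>v v + reg \<cdot>\<^sub>v v"
    using K v by (auto simp: add_mult_distrib_mat_vec)
  ultimately show ?thesis
    using K v by (simp add: scalar_prod_add_distrib[of _ ?n])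
qed

definition kmat_reg_inv :: "('a \<Rightarrow> 'a \<Rightarrow> real) \<Rightarrow> real \<Rightarrow> 'a list \<Rightarrow> real mat" where
  "kmat_reg_inv k reg zs = the (mat_inverse (kmat k zs + reg \<cdot>\<^sub>m 1\<^sub>m (length zs)))"

definition variance_reduction :: "('a \<Rightarrow> 'a \<Rightarrow> real) \<Rightarrow> real \<Rightarrow> 'a list \<Rightarrow> 'a \<Rightarrow> real" where
  "variance_reduction k reg zs z = (\<Sum>i<length zs. \<Sum>j<length zs.
     k z (zs ! i) * kmat_reg_inv k reg zs $$ (i, j) * k z (zs ! j))"

lemma post_sd_eq_variance_reduction:
  assumes "kmat_reg_inv k reg zs \<in> carrier_mat (length zs) (length zs)"
  shows "post_sd k reg zs z = sqrt (k z z - variance_reduction k reg zs z)"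
  using quadratic_form_eq_double_sum[OF assms, of "kvec k zs z"]
  by (simp add: post_sd_def variance_reduction_def kmat_reg_inv_def kvec_def)

definition mercer_tail_const :: "real \<Rightarrow> real \<Rightarrow> real \<Rightarrow> real" where
  "mercer_tail_const C Cphi p = Cphi\<^sup>2 * C * 2 powr p / (p - 1)"

text \<open>\<open>c\<close> and \<open>8 * R * Cphi\<^sup>2 * (c powr a + 1) + 3\<close> are the constants of
  \<open>truncation_order_exists\<close> and \<open>quantization_level_bound\<close>.\<close>

definition log_covering_const :: "real \<Rightarrow> real \<Rightarrow> real \<Rightarrow> real \<Rightarrow> nat \<Rightarrow> real" where
  "log_covering_const C Cphi p reg T =
    (let a = 2 / (p - 1);
         c = 24 * ((real T)\<^sup>2 + 1) * (mercer_tail_const C Cphi p)\<^sup>2 / reg;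
         R = (real T)\<^sup>2 * ((C * Cphi)\<^sup>2 / reg)
     in c powr a * (ln (8 * R * Cphi\<^sup>2 * (c powr a + 1) + 3) + 2 * a + 2))"

locale mercer_kernel =
  fixes D :: "'a set" and mu :: "'a measure" and k :: "'a \<Rightarrow> 'a \<Rightarrow> real"
    and lam :: "nat \<Rightarrow> real" and phi :: "nat \<Rightarrow> 'a \<Rightarrow> real"
    and C Cphi p :: real and g :: nat and reg :: real
  assumes eigendecay: "eigendecay D mu k lam phi C Cphi p g"
    and pd: "pd_kernel D k"
    and p_gt_1: "p > 1" and C_pos: "C > 0" and Cphi_pos: "Cphi > 0" and reg_pos: "reg > 0"
begin

abbreviation \<kappa> :: real where "\<kappa> \<equiv> mercer_tail_const C Cphi p"

lemma mercer_tail_const_pos: "\<kappa> > 0"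
  using p_gt_1 C_pos Cphi_pos by (simp add: mercer_tail_const_def)

lemma eigenvalue_pos: "lam m > 0"
  using eigendecay unfolding eigendecay_def by blast

lemma eigenfunction_bound: "z \<in> D \<Longrightarrow> \<bar>phi m z\<bar> \<le> Cphi"
  using eigendecay unfolding eigendecay_def by blast

lemma eigenvalue_le: "lam m \<le> C * real g powr - p * real (m + 1) powr - p"
proof -
  have "lam m \<le> C * (real (Suc m) * real g) powr - p"
    using eigendecay unfolding eigendecay_def by blast
  then show ?thesis
    by (simp add: powr_mult mult_ac)
qed

lemma card_ge_1: "g \<ge> 1"
proof (rule ccontr)
  assume "\<not> g \<ge> 1"
  then have "g = 0"
    by simp
  then have "lam 0 \<le> 0"
    using eigenvalue_le[of 0] by simp
  with eigenvalue_pos[of 0] show False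
    by simp
qed

lemma card_powr_neg_le_1: "real g powr - p \<le> 1"
  using card_ge_1 p_gt_1 by (intro powr_le_1_of_nonpos) auto

lemma eigenvalue_le_C: "lam m \<le> C"
proof -
  have "real (m + 1) powr - p \<le> 1"
    using p_gt_1 by (intro powr_le_1_of_nonpos) auto
  then have "C * real g powr - p * real (m + 1) powr - p \<le> C * 1 * 1"
    using card_powr_neg_le_1 C_pos by (intro mult_mono) auto
  with eigenvalue_le[of m] show ?thesis
    by simp
qed

lemma mercer_truncation_error:
  assumes z: "z \<in> D" and z': "z' \<in> D"
  shows "\<bar>k z z' - (\<Sum>m<M. lam m * phi m z * phi m z')\<bar>
    \<le> \<kappa> * real g powr - p * real (M + 1) powr (1 - p)"
proof -
  define f where "f m = lam m * phi m z * phi m z'" for m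
  have "f sums k z z'"
    using eigendecay z z' unfolding eigendecay_def f_def by blast
  then have tail: "(\<lambda>i. f (i + M)) sums (k z z' - (\<Sum>m<M. f m))"
    by (rule sums_split_initial_segment)
  have f_le: "norm (f (i + M)) \<le> Cphi\<^sup>2 * C * real g powr - p * real (i + M + 1) powr - p" for i
  proof -
    have "\<bar>f (i + M)\<bar> = lam (i + M) * (\<bar>phi (i + M) z\<bar> * \<bar>phi (i + M) z'\<bar>)"
      using eigenvalue_pos[of "i + M"] by (simp add: f_def abs_mult)
    also have "\<dots> \<le> lam (i + M) * Cphi\<^sup>2"
      using eigenvalue_pos[of "i + M"] eigenfunction_bound[OF z] eigenfunction_bound[OF z'] Cphi_pos
      by (auto simp: power2_eq_square intro!: mult_left_mono mult_mono)
    also have "\<dots> \<le> C * real g powr - p * real (i + M + 1) powr - p * Cphi\<^sup>2"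
      using eigenvalue_le[of "i + M"] by (intro mult_right_mono) auto
    finally show ?thesis
      by (simp add: mult_ac)
  qed
  have summable: "summable (\<lambda>i. Cphi\<^sup>2 * C * real g powr - p * real (i + M + 1) powr - p)"
    using powr_tail_sum(1)[OF p_gt_1] by (rule summable_mult)
  have "\<bar>k z z' - (\<Sum>m<M. f m)\<bar> = norm (\<Sum>i. f (i + M))"
    using tail by (simp add: sums_iff)
  also have "\<dots> \<le> (\<Sum>i. Cphi\<^sup>2 * C * real g powr - p * real (i + M + 1) powr - p)"
    by (rule norm_suminf_le[OF f_le summable])
  also have "\<dots> = Cphi\<^sup>2 * C * real g powr - p * (\<Sum>i. real (i + M + 1) powr - p)"
    by (rule suminf_mult[OF powr_tail_sum(1)[OF p_gt_1]])
  also have "\<dots> \<le> Cphi\<^sup>2 * C * real g powr - p * (2 powr p * real (M + 1) powr (1 - p) / (p - 1))"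
    using powr_tail_sum(2)[OF p_gt_1] C_pos by (intro mult_left_mono) auto
  finally show ?thesis
    by (simp add: f_def mercer_tail_const_def mult_ac)
qed

lemma kernel_bound:
  assumes "z \<in> D" and "z' \<in> D"
  shows "\<bar>k z z'\<bar> \<le> \<kappa>"
proof -
  have "\<bar>k z z'\<bar> \<le> \<kappa> * real g powr - p"
    using mercer_truncation_error[OF assms, of 0] by simp
  also have "\<dots> \<le> \<kappa>"
    using card_powr_neg_le_1 mercer_tail_const_pos by (simp add: mult_left_le)
  finally show ?thesis .
qed

lemma kmat_reg_inv:
  assumes "set zs \<subseteq> D"
  shows "kmat_reg_inv k reg zs \<in> carrier_mat (length zs) (length zs)"
    and "(kmat k zs + reg \<cdot>\<^sub>m 1\<^sub>m (length zs)) * kmat_reg_inv k reg zs = 1\<^sub>m (length zs)"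
proof -
  let ?A = "kmat k zs + reg \<cdot>\<^sub>m 1\<^sub>m (length zs)"
  have "?A \<in> carrier_mat (length zs) (length zs)"
    by (simp add: kmat_def)
  then obtain W where "mat_inverse ?A = Some W" "W \<in> carrier_mat (length zs) (length zs)" "?A * W = 1\<^sub>m (length zs)"
    using coercive_mat_inverse reg_pos kmat_reg_coercive[OF pd assms] by blast
  then show "kmat_reg_inv k reg zs \<in> carrier_mat (length zs) (length zs)" "?A * kmat_reg_inv k reg zs = 1\<^sub>m (length zs)"
    by (simp_all add: kmat_reg_inv_def)
qed

lemma kmat_reg_inv_entry_bound:
  assumes "set zs \<subseteq> D" and "i < length zs" and "j < length zs"
  shows "\<bar>kmat_reg_inv k reg zs $$ (i, j)\<bar> \<le> 1 / reg"
  by (rule coercive_mat_inverse_entry_bound[OF _ kmat_reg_inv[OF assms(1)] reg_pos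
        kmat_reg_coercive[OF pd assms(1)] assms(2,3)]) (simp add: kmat_def)

definition feature_coeff :: "'a list \<Rightarrow> nat \<Rightarrow> nat \<Rightarrow> real" where
  "feature_coeff zs m n = (\<Sum>i<length zs. \<Sum>j<length zs.
     lam m * phi m (zs ! i) * kmat_reg_inv k reg zs $$ (i, j) * (lam n * phi n (zs ! j)))"

lemma feature_coeff_bound:
  assumes zs: "set zs \<subseteq> D"
  shows "\<bar>feature_coeff zs m n\<bar> \<le> (real (length zs))\<^sup>2 * ((C * Cphi)\<^sup>2 / reg)"
  unfolding feature_coeff_def
proof (rule abs_double_sum_le)
  have lam_phi: "\<bar>lam l * phi l (zs ! i)\<bar> \<le> C * Cphi" if "i < length zs" for l i
    using eigenvalue_pos[of l] eigenvalue_le_C[of l] eigenfunction_bound[of "zs ! i" l] nth_mem[OF that] zs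
    by (auto simp: abs_mult intro!: mult_mono)
  fix i j assume i: "i < length zs" and j: "j < length zs"
  have "\<bar>lam m * phi m (zs ! i) * kmat_reg_inv k reg zs $$ (i, j) * (lam n * phi n (zs ! j))\<bar>
      = \<bar>lam m * phi m (zs ! i)\<bar> * \<bar>kmat_reg_inv k reg zs $$ (i, j)\<bar> * \<bar>lam n * phi n (zs ! j)\<bar>"
    by (simp add: abs_mult)
  also have "\<dots> \<le> (C * Cphi) * (1 / reg) * (C * Cphi)"
    using lam_phi[OF i, of m] lam_phi[OF j, of n] kmat_reg_inv_entry_bound[OF zs i j]
      C_pos Cphi_pos reg_pos
    by (intro mult_mono) auto
  finally show "\<bar>lam m * phi m (zs ! i) * kmat_reg_inv k reg zs $$ (i, j) * (lam n * phi n (zs ! j))\<bar>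
      \<le> (C * Cphi)\<^sup>2 / reg"
    by (simp add: power2_eq_square)
qed

definition trunc_error :: "nat \<Rightarrow> nat \<Rightarrow> real" where
  "trunc_error t M = (real t)\<^sup>2 * (3 * \<kappa>\<^sup>2 * real g powr - p * real (M + 1) powr (1 - p) / reg)"

lemma trunc_error_mono: "t \<le> T \<Longrightarrow> trunc_error t M \<le> trunc_error T M"
  unfolding trunc_error_def using reg_pos by (intro mult_right_mono power_mono) auto

lemma variance_reduction_truncation:
  assumes zs: "set zs \<subseteq> D" and z: "z \<in> D"
  shows "\<bar>variance_reduction k reg zs z - (\<Sum>m<M. \<Sum>n<M. phi m z * phi n z * feature_coeff zs m n)\<bar>
    \<le> trunc_error (length zs) M"
proof -
  let ?t = "length zs" and ?W = "kmat_reg_inv k reg zs"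
  define \<rho> where "\<rho> = \<kappa> * real g powr - p * real (M + 1) powr (1 - p)"
  define b where "b i = (\<Sum>m<M. phi m z * (lam m * phi m (zs ! i)))" for i
  have zs_i: "zs ! i \<in> D" if "i < ?t" for i
    using zs that by auto
  have "real (M + 1) powr (1 - p) \<le> 1"
    using p_gt_1 by (intro powr_le_1_of_nonpos) auto
  then have "\<rho> \<le> \<kappa> * 1 * 1"
    unfolding \<rho>_def using card_powr_neg_le_1 mercer_tail_const_pos by (intro mult_mono) auto
  then have "\<bar>variance_reduction k reg zs z - (\<Sum>i<?t. \<Sum>j<?t. b i * ?W $$ (i, j) * b j)\<bar>
      \<le> (real ?t)\<^sup>2 * (1 / reg * (3 * \<kappa> * \<rho>))"
    unfolding variance_reduction_def
    using kmat_reg_inv_entry_bound[OF zs] kernel_bound[OF z zs_i]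
      mercer_truncation_error[OF z zs_i, of _ M]
    by (intro quadratic_form_perturbation) (auto simp: b_def \<rho>_def mult_ac)
  moreover have "(\<Sum>i<?t. \<Sum>j<?t. b i * ?W $$ (i, j) * b j)
      = (\<Sum>m<M. \<Sum>n<M. phi m z * phi n z * feature_coeff zs m n)"
    unfolding b_def feature_coeff_def
    by (rule quadratic_form_of_linear_combination[where W = "\<lambda>i j. ?W $$ (i, j)"])
  ultimately show ?thesis
    using reg_pos by (simp add: trunc_error_def \<rho>_def power2_eq_square field_simps)
qed

lemma post_sd_close:
  assumes zs1: "set zs1 \<subseteq> D" "length zs1 \<le> T" and zs2: "set zs2 \<subseteq> D" "length zs2 \<le> T"
    and z: "z \<in> D"
    and coeff: "\<And>m n. m < M \<Longrightarrow> n < M \<Longrightarrow> \<bar>feature_coeff zs1 m n - feature_coeff zs2 m n\<bar> \<le> \<delta>"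
  shows "\<bar>post_sd k reg zs1 z - post_sd k reg zs2 z\<bar>
    \<le> sqrt (2 * (2 * trunc_error T M + (real M)\<^sup>2 * (Cphi\<^sup>2 * \<delta>)))"
proof -
  define S where "S zs = (\<Sum>m<M. \<Sum>n<M. phi m z * phi n z * feature_coeff zs m n)" for zs
  have "\<bar>S zs1 - S zs2\<bar>
      = \<bar>\<Sum>m<M. \<Sum>n<M. phi m z * phi n z * (feature_coeff zs1 m n - feature_coeff zs2 m n)\<bar>"
    by (simp add: S_def sum_subtractf algebra_simps)
  also have "\<dots> \<le> (real M)\<^sup>2 * (Cphi\<^sup>2 * \<delta>)"
  proof (rule abs_double_sum_le)
    fix m n assume "m < M" "n < M"
    then show "\<bar>phi m z * phi n z * (feature_coeff zs1 m n - feature_coeff zs2 m n)\<bar> \<le> Cphi\<^sup>2 * \<delta>"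
      using eigenfunction_bound[OF z, of m] eigenfunction_bound[OF z, of n] coeff[of m n]
      by (auto simp: abs_mult power2_eq_square intro!: mult_mono)
  qed
  finally have S: "\<bar>S zs1 - S zs2\<bar> \<le> (real M)\<^sup>2 * (Cphi\<^sup>2 * \<delta>)" .
  have V: "\<bar>variance_reduction k reg zs z - S zs\<bar> \<le> trunc_error T M"
    if "set zs \<subseteq> D" "length zs \<le> T" for zs
    using variance_reduction_truncation[OF that(1) z, of M] trunc_error_mono[OF that(2), of M]
    unfolding S_def by linarith
  have "\<bar>post_sd k reg zs1 z - post_sd k reg zs2 z\<bar>
      \<le> sqrt (2 * \<bar>(k z z - variance_reduction k reg zs1 z) - (k z z - variance_reduction k reg zs2 z)\<bar>)"
    using abs_sqrt_diff_le[of "k z z - variance_reduction k reg zs1 z" "k z z - variance_reduction k reg zs2 z"]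
    by (simp add: post_sd_eq_variance_reduction[OF kmat_reg_inv(1)] zs1(1) zs2(1))
  also have "\<dots> \<le> sqrt (2 * (2 * trunc_error T M + (real M)\<^sup>2 * (Cphi\<^sup>2 * \<delta>)))"
  proof -
    have "\<bar>(k z z - variance_reduction k reg zs1 z) - (k z z - variance_reduction k reg zs2 z)\<bar>
        \<le> 2 * trunc_error T M + (real M)\<^sup>2 * (Cphi\<^sup>2 * \<delta>)"
      using S V[OF zs1] V[OF zs2] unfolding abs_diff_le_iff by linarith
    then show ?thesis
      by simp
  qed
  finally show ?thesis .
qed

lemma covering_number_post_sd_class_le:
  fixes M T :: nat
  assumes \<delta>: "\<delta> > 0" and eps: "0 \<le> eps"
    and eps_bound: "2 * (2 * trunc_error T M + (real M)\<^sup>2 * (Cphi\<^sup>2 * \<delta>)) \<le> eps\<^sup>2"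
  shows "covering_number (post_sd_class D k reg T) D eps
    \<le> enat (nat (2 * \<lceil>(real T)\<^sup>2 * ((C * Cphi)\<^sup>2 / reg) / \<delta>\<rceil> + 1) ^ (M * M))"
proof -
  define R where "R = (real T)\<^sup>2 * ((C * Cphi)\<^sup>2 / reg)"
  define L where "L = \<lceil>R / \<delta>\<rceil>"
  define Zs where "Zs = {zs. distinct zs \<and> set zs \<subseteq> D \<and> length zs \<le> T}"
  define lab where "lab zs = restrict (\<lambda>(m, n). \<lfloor>feature_coeff zs m n / \<delta>\<rfloor>) ({..<M} \<times> {..<M})" for zs
  define S where "S = ({..<M} \<times> {..<M}) \<rightarrow>\<^sub>E {- L..L}"
  have "covering_number (post_sd k reg ` Zs) D eps \<le> enat (card S)"
  proof (rule covering_number_image_le)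
    show "finite S"
      by (simp add: S_def finite_PiE)
    have coeff_bound: "\<bar>feature_coeff zs m n\<bar> \<le> R" if "zs \<in> Zs" for zs m n
    proof -
      have "(real (length zs))\<^sup>2 * ((C * Cphi)\<^sup>2 / reg) \<le> R"
        unfolding R_def using that reg_pos by (intro mult_right_mono power_mono) (auto simp: Zs_def)
      with feature_coeff_bound[of zs m n] that show ?thesis
        by (auto simp: Zs_def)
    qed
    show "lab ` Zs \<subseteq> S"
    proof (rule image_subsetI)
      fix zs assume "zs \<in> Zs"
      then have "\<lfloor>feature_coeff zs m n / \<delta>\<rfloor> \<in> {- L..L}" for m n
        using floor_divide_mem_bounds[OF coeff_bound \<delta>] by (simp add: L_def)
      then show "lab zs \<in> S"
        by (auto simp: lab_def S_def restrict_PiE_iff)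
    qed
    show "\<bar>post_sd k reg zs1 z - post_sd k reg zs2 z\<bar> \<le> eps"
      if "zs1 \<in> Zs" "zs2 \<in> Zs" "lab zs1 = lab zs2" "z \<in> D" for zs1 zs2 z
    proof -
      have "\<bar>feature_coeff zs1 m n - feature_coeff zs2 m n\<bar> \<le> \<delta>" if "m < M" "n < M" for m n
        using fun_cong[OF \<open>lab zs1 = lab zs2\<close>, of "(m, n)"] that
          abs_diff_lt_of_floor_divide_eq[OF _ \<delta>]
        by (fastforce simp: lab_def)
      then have "\<bar>post_sd k reg zs1 z - post_sd k reg zs2 z\<bar>
          \<le> sqrt (2 * (2 * trunc_error T M + (real M)\<^sup>2 * (Cphi\<^sup>2 * \<delta>)))"
        using that by (intro post_sd_close) (auto simp: Zs_def)
      also have "\<dots> \<le> eps"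
        using eps eps_bound by (rule real_le_lsqrt)
      finally show ?thesis .
    qed
  qed
  moreover have "post_sd_class D k reg T = post_sd k reg ` Zs"
    by (auto simp: post_sd_class_def Zs_def)
  moreover have "card S = nat (2 * L + 1) ^ (M * M)"
    by (simp add: S_def card_PiE)
  ultimately show ?thesis
    by (simp add: R_def L_def)
qed

lemma trunc_error_le:
  assumes "real (M + 1) powr (1 - p) \<le> eps\<^sup>2 * real g powr p / (24 * ((real T)\<^sup>2 + 1) * \<kappa>\<^sup>2 / reg)"
  shows "trunc_error T M \<le> eps\<^sup>2 / 8"
proof -
  have g: "real g powr p > 0"
    using card_ge_1 by simp
  have T: "(real T)\<^sup>2 + 1 > 0"
    by (simp add: add_nonneg_pos)
  have "trunc_error T M \<le> (real T)\<^sup>2 * (3 * \<kappa>\<^sup>2 * real g powr - p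
      * (eps\<^sup>2 * real g powr p / (24 * ((real T)\<^sup>2 + 1) * \<kappa>\<^sup>2 / reg)) / reg)"
    unfolding trunc_error_def using assms reg_pos by (intro mult_left_mono divide_right_mono) auto
  also have "\<dots> = eps\<^sup>2 / 8 * ((real T)\<^sup>2 / ((real T)\<^sup>2 + 1))"
    using g T mercer_tail_const_pos reg_pos
    by (simp add: powr_minus divide_simps)
  also have "\<dots> \<le> eps\<^sup>2 / 8"
    using T by (intro mult_left_le) (simp_all add: divide_le_eq_1_pos)
  finally show ?thesis .
qed

lemma truncation_order_exists:
  assumes eps: "0 < eps"
  obtains M where "trunc_error T M \<le> eps\<^sup>2 / 8"
    and "(real M)\<^sup>2 \<le> (24 * ((real T)\<^sup>2 + 1) * \<kappa>\<^sup>2 / reg) powr (2 / (p - 1))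
      * (1 / (eps\<^sup>2 * real g powr p)) powr (2 / (p - 1))"
    and "(real M)\<^sup>2 \<le> (24 * ((real T)\<^sup>2 + 1) * \<kappa>\<^sup>2 / reg) powr (2 / (p - 1))
      * (1 / eps) powr (4 / (p - 1))"
proof -
  define c where "c = 24 * ((real T)\<^sup>2 + 1) * \<kappa>\<^sup>2 / reg"
  define x where "x = 1 / (eps\<^sup>2 * real g powr p)"
  define M where "M = nat \<lfloor>(c * x) powr (1 / (p - 1))\<rfloor>"
  have g: "real g powr p \<ge> 1"
    using card_ge_1 p_gt_1 by (intro ge_one_powr_ge_zero) auto
  have c: "c > 0"
    unfolding c_def using mercer_tail_const_pos reg_pos
    by (intro divide_pos_pos mult_pos_pos) (auto intro: add_nonneg_pos)
  have x: "x > 0"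
    unfolding x_def using eps card_ge_1 by (intro divide_pos_pos mult_pos_pos) auto
  have M_tail: "real (M + 1) powr (1 - p) \<le> 1 / (c * x)"
    and M_sq: "(real M)\<^sup>2 \<le> (c * x) powr (2 / (p - 1))"
    using nat_floor_powr_bounds[of "c * x" "p - 1"] c x p_gt_1 by (simp_all add: M_def)
  have "trunc_error T M \<le> eps\<^sup>2 / 8"
    using M_tail by (intro trunc_error_le) (simp add: x_def c_def mult_ac)
  moreover have M_sq': "(real M)\<^sup>2 \<le> c powr (2 / (p - 1)) * x powr (2 / (p - 1))"
    using M_sq c x by (simp add: powr_mult)
  moreover have "x powr (2 / (p - 1)) \<le> (1 / eps) powr (4 / (p - 1))"
  proof -
    have "x \<le> 1 / eps\<^sup>2"
      unfolding x_def using eps g card_ge_1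
      by (intro divide_left_mono) (auto simp: mult_le_cancel_left1)
    then have "x powr (2 / (p - 1)) \<le> (1 / eps\<^sup>2) powr (2 / (p - 1))"
      using x p_gt_1 by (intro powr_mono2) auto
    also have "1 / eps\<^sup>2 = (1 / eps) powr 2"
      using eps by (simp add: powr_numeral power_one_over)
    also have "((1 / eps) powr 2) powr (2 / (p - 1)) = (1 / eps) powr (4 / (p - 1))"
      by (simp add: powr_powr)
    finally show ?thesis .
  qed
  ultimately show thesis
    using that[of M] order_trans[OF M_sq' mult_left_mono] unfolding c_def x_def by auto
qed

lemma ln_covering_number_post_sd_class_le:
  assumes eps: "0 < eps" "eps < 1"
  shows "covering_number (post_sd_class D k reg T) D eps \<noteq> \<infinity> \<and>
    ln (real (the_enat (covering_number (post_sd_class D k reg T) D eps)))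
      \<le> log_covering_const C Cphi p reg T * (1 / (eps\<^sup>2 * real g powr p)) powr (2 / (p - 1))
        * (1 + ln (1 / eps))"
proof -
  define a where "a = 2 / (p - 1)"
  define c where "c = 24 * ((real T)\<^sup>2 + 1) * \<kappa>\<^sup>2 / reg"
  define x where "x = 1 / (eps\<^sup>2 * real g powr p)"
  define R where "R = (real T)\<^sup>2 * ((C * Cphi)\<^sup>2 / reg)"
  define K where "K = 8 * R * Cphi\<^sup>2 * (c powr a + 1) + 3"
  obtain M where M_err: "trunc_error T M \<le> eps\<^sup>2 / 8"
    and M_sq: "(real M)\<^sup>2 \<le> c powr a * x powr a"
    and M_sq': "(real M)\<^sup>2 \<le> c powr a * (1 / eps) powr (4 / (p - 1))"
    using truncation_order_exists[OF eps(1)] unfolding a_def c_def x_def by blast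
  define \<delta> where "\<delta> = eps\<^sup>2 / (4 * ((real M)\<^sup>2 + 1) * Cphi\<^sup>2)"
  define L where "L = \<lceil>R / \<delta>\<rceil>"
  have R: "R \<ge> 0"
    using reg_pos by (simp add: R_def)
  have \<delta>: "\<delta> > 0"
    unfolding \<delta>_def using eps Cphi_pos
    by (intro divide_pos_pos mult_pos_pos) (auto intro: add_nonneg_pos)
  have L: "L \<ge> 0"
    using divide_nonneg_pos[OF R \<delta>] by (simp add: L_def)
  have "covering_number (post_sd_class D k reg T) D eps \<le> enat (nat (2 * L + 1) ^ (M * M))"
    using covering_number_post_sd_class_le[OF \<delta>, of eps T M] eps M_err
      square_mult_mesh_le[OF Cphi_pos, of M eps]
    by (simp add: R_def L_def \<delta>_def)
  then obtain N where N: "covering_number (post_sd_class D k reg T) D eps = enat N"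
    "N \<le> nat (2 * L + 1) ^ (M * M)"
    by (metis enat_ile enat_ord_simps(1))
  have "2 * real_of_int L + 1 \<le> K * (1 / eps) powr (4 / (p - 1) + 2)"
    unfolding K_def L_def \<delta>_def
    using eps p_gt_1 R Cphi_pos by (intro quantization_level_bound M_sq') auto
  then have "ln (real N) \<le> c powr a * x powr a * ((ln K + (4 / (p - 1) + 2)) * (1 + ln (1 / eps)))"
    using eps p_gt_1 R by (intro ln_le_of_le_grid_card[OF N(2) L M_sq]) (auto simp: K_def)
  also have "\<dots> = log_covering_const C Cphi p reg T * x powr a * (1 + ln (1 / eps))"
    by (simp add: log_covering_const_def Let_def a_def c_def R_def K_def)
  finally show ?thesis
    using N(1) by (simp add: x_def a_def)
qed

end

theorem lemma6:
  fixes D :: "'a::metric_space set" and mu :: "'a measure"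
    and p C Cphi reg :: real and T :: nat
  assumes "compact D" and "p > 1" and "C > 0" and "Cphi > 0" and "reg > 0"
  shows "\<exists>K. \<forall>(G :: 'g monoid) k lam phi eps.
     group G \<and> finite (carrier G) \<and>
     continuous_on (D \<times> D) (\<lambda>(x, y). k x y) \<and> pd_kernel D k \<and>
     eigendecay D mu k lam phi C Cphi p (card (carrier G)) \<and> 0 < eps \<and> eps < 1
     \<longrightarrow> covering_number (post_sd_class D k reg T) D eps \<noteq> \<infinity> \<and>
         ln (real (the_enat (covering_number (post_sd_class D k reg T) D eps)))
           \<le> K * (1 / (eps\<^sup>2 * real (card (carrier G)) powr p)) powr (2 / (p - 1)) * (1 + ln (1 / eps))"
proof (intro exI[of _ "log_covering_const C Cphi p reg T"] allI impI)
  fix G :: "'g monoid" and k lam phi and eps :: real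
  assume H: "group G \<and> finite (carrier G) \<and>
     continuous_on (D \<times> D) (\<lambda>(x, y). k x y) \<and> pd_kernel D k \<and>
     eigendecay D mu k lam phi C Cphi p (card (carrier G)) \<and> 0 < eps \<and> eps < 1"
  interpret mercer_kernel D mu k lam phi C Cphi p "card (carrier G)" reg
    using H assms by unfold_locales auto
  show "covering_number (post_sd_class D k reg T) D eps \<noteq> \<infinity> \<and>
      ln (real (the_enat (covering_number (post_sd_class D k reg T) D eps)))
        \<le> log_covering_const C Cphi p reg T * (1 / (eps\<^sup>2 * real (card (carrier G)) powr p))
          powr (2 / (p - 1)) * (1 + ln (1 / eps))"
    using H by (intro ln_covering_number_post_sd_class_le) auto
qed

end
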